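(* Let $\ell\ge 0$ and let $G=(X\uplus Z,E)$ be the graph with $|Z|=2^\ell$ and $|X|=\binom{2^\ell}{2}$ in which every pair $\{z_1,z_2\}$ of distinct vertices of $Z$ is joined by an edge, and for every such pair there is a distinct vertex $x\in X$ adjacent exactly to $z_1$ and $z_2$. An arbitrary vertex of $Z$ is the root. Fix a (possibly randomized) online algorithm $A$ for the online Steiner tree problem on $G$ (terminals from $X$ arrive one by one; after each arrival $A$ adds edges, never removing any, so that all terminals so far are connected to the root). Then for every subset $S\subseteq Z$ with $|S|=2^s$, $0\le s\le\ell$, there exists a request sequence $\sigma=\sigma_S$ of terminals from $X$ such that: (i) for every $x\in\sigma$, both neighbors of $x$ in $G$ lie in $S$; (ii) there exists $z^*\in S$ with $\mathbb{E}[\deg'_{A,\sigma}(z^* )]\ge s/2$; (iii) there exists an offline solution $\mathrm{OFF}$ connecting all terminals of $\sigma$ to the root with $\max_{z\in S}\deg_{\mathrm{OFF},\sigma}(z)\le 1$ and $\deg_{\mathrm{OFF},\sigma}(z)=0$ for all $z\in(Z\setminus S)\cup\{z^*\}$.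
   Context: For $z\in Z$, a (online or offline) solution $B$ and request sequence $\sigma$, $\deg_{B,\sigma}(z)$ denotes the number of neighbors of $z$ among vertices of $X$ in the subgraph produced by $B$ on $\sigma$ (edges between vertices of $Z$ are ignored), and $\deg'_{B,\sigma}(z)$ denotes the number of those neighbors of $z$ in $X$ (in the produced subgraph) that also appear in $\sigma$. Expectations are over the randomness of $A$. *)

theory Defs
  imports "HOL-Probability.Probability"
begin

datatype vtx = Zv nat | Xv "nat set"

definition Zs :: "nat \<Rightarrow> nat set" where
  "Zs l = {0..<2^l}"

definition Xs :: "nat \<Rightarrow> vtx set" where
  "Xs l = {Xv p | p. p \<subseteq> Zs l \<and> card p = 2}"

definition edges :: "nat \<Rightarrow> vtx set set" where
  "edges l = {{Zv a, Zv b} | a b. a \<in> Zs l \<and> b \<in> Zs l \<and> a \<noteq> b}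
           \<union> {{Xv p, Zv z} | p z. Xv p \<in> Xs l \<and> z \<in> p}"

definition connected_in :: "vtx set set \<Rightarrow> vtx \<Rightarrow> vtx \<Rightarrow> bool" where
  "connected_in F u v \<longleftrightarrow> (u, v) \<in> {(a, b). {a, b} \<in> F}\<^sup>*"

definition feasible :: "nat \<Rightarrow> nat \<Rightarrow> vtx list \<Rightarrow> vtx set set \<Rightarrow> bool" where
  "feasible l r \<sigma> F \<longleftrightarrow> F \<subseteq> edges l \<and> (\<forall>x\<in>set \<sigma>. connected_in F x (Zv r))"

text \<open>A deterministic online algorithm: Alg sigma is the edge set held after serving
  the requests sigma one by one (it depends only on the requests seen so far);
  edges are never removed and every prefix is served feasibly.\<close>
definition online_alg :: "nat \<Rightarrow> nat \<Rightarrow> (vtx list \<Rightarrow> vtx set set) \<Rightarrow> bool" where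
  "online_alg l r Alg \<longleftrightarrow>
     (\<forall>\<sigma>. set \<sigma> \<subseteq> Xs l \<longrightarrow> feasible l r \<sigma> (Alg \<sigma>)) \<and>
     (\<forall>\<sigma> x. set (\<sigma> @ [x]) \<subseteq> Xs l \<longrightarrow> Alg \<sigma> \<subseteq> Alg (\<sigma> @ [x]))"

definition deg :: "nat \<Rightarrow> vtx set set \<Rightarrow> nat \<Rightarrow> nat" where
  "deg l F z = card {x \<in> Xs l. {x, Zv z} \<in> F}"

definition deg' :: "vtx list \<Rightarrow> vtx set set \<Rightarrow> nat \<Rightarrow> nat" where
  "deg' \<sigma> F z = card {x \<in> set \<sigma>. {x, Zv z} \<in> F}"

end

theory Submission
  imports Defs
begin

text \<open>Induction on \<open>s\<close>, where the request sequence may follow an arbitrary prefix \<open>\<tau>\<close> already served.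
  Split \<open>S\<close> into halves \<open>S\<^sub>1\<close>, \<open>S\<^sub>2\<close>; serve the sequence \<open>\<sigma>\<^sub>1\<close> for \<open>S\<^sub>1\<close> (with distinguished vertex
  \<open>z\<^sub>1\<close>), then the sequence \<open>\<sigma>\<^sub>2\<close> for \<open>S\<^sub>2\<close> (with \<open>z\<^sub>2\<close>), and finally request the vertex \<open>x\<close> adjacent
  to \<open>z\<^sub>1\<close> and \<open>z\<^sub>2\<close>. The algorithm must connect \<open>x\<close> through \<open>z\<^sub>1\<close> or \<open>z\<^sub>2\<close> and never drops edges,
  so the expected degrees of \<open>z\<^sub>1\<close> and \<open>z\<^sub>2\<close> sum to at least \<open>s/2 + s/2 + 1\<close>; the larger one is
  the new distinguished vertex. Offline, every request is attached to one of its endpoints,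
  injectively and avoiding the distinguished vertex: \<open>x\<close> goes to the endpoint not chosen.\<close>

lemma feasible_request_edge:
  assumes "feasible l r \<sigma> F" "Xv p \<in> set \<sigma>"
  shows "\<exists>z\<in>p. {Xv p, Zv z} \<in> F"
proof -
  have "(Xv p, Zv r) \<in> {(a, b). {a, b} \<in> F}\<^sup>*"
    using assms by (simp add: feasible_def connected_in_def)
  then obtain b where b: "{Xv p, b} \<in> F"
    by (cases rule: converse_rtranclE) auto
  then have "{Xv p, b} \<in> edges l" using assms(1) by (auto simp: feasible_def)
  then show ?thesis using b unfolding edges_def by (auto simp: doubleton_eq_iff)
qed

lemma online_alg_prefix_mono:
  assumes "online_alg l r Alg" "set (\<tau> @ \<rho>) \<subseteq> Xs l"
  shows "Alg \<tau> \<subseteq> Alg (\<tau> @ \<rho>)"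
  using assms(2)
proof (induction \<rho> rule: rev_induct)
  case (snoc x \<rho>)
  have "Alg (\<tau> @ \<rho>) \<subseteq> Alg ((\<tau> @ \<rho>) @ [x])"
    using assms(1) snoc.prems unfolding online_alg_def by (simp del: append_assoc)
  with snoc show ?case by auto
qed simp

lemma deg'_le_length: "deg' \<sigma> F z \<le> length \<sigma>"
proof -
  have "deg' \<sigma> F z \<le> card (set \<sigma>)" unfolding deg'_def by (rule card_mono) auto
  also have "\<dots> \<le> length \<sigma>" by (rule card_length)
  finally show ?thesis .
qed

lemma deg'_add_request:
  assumes "set \<sigma> \<subseteq> set \<rho>" "x \<in> set \<rho>" "x \<notin> set \<sigma>" "F \<subseteq> F'"
  shows "deg' \<sigma> F z + (if {x, Zv z} \<in> F' then 1 else 0) \<le> deg' \<rho> F' z"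
proof -
  let ?B = "{y \<in> set \<sigma>. {y, Zv z} \<in> F}"
  let ?C = "if {x, Zv z} \<in> F' then insert x ?B else ?B"
  have "card ?C \<le> deg' \<rho> F' z"
    unfolding deg'_def by (rule card_mono) (use assms in auto)
  moreover have "card ?C = card ?B + (if {x, Zv z} \<in> F' then 1 else 0)"
    using assms(3) by auto
  ultimately show ?thesis by (simp add: deg'_def)
qed

lemma online_alg_deg'_gain:
  fixes \<tau> \<sigma>\<^sub>1 \<sigma>\<^sub>2 :: "vtx list" and z\<^sub>1 z\<^sub>2 :: nat
  defines "x \<equiv> Xv {z\<^sub>1, z\<^sub>2}"
  defines "\<rho> \<equiv> \<sigma>\<^sub>1 @ \<sigma>\<^sub>2 @ [x]"
  assumes alg: "online_alg l r Alg"
    and "set (\<tau> @ \<rho>) \<subseteq> Xs l" "x \<notin> set \<sigma>\<^sub>1" "x \<notin> set \<sigma>\<^sub>2"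
  shows "deg' \<sigma>\<^sub>1 (Alg (\<tau> @ \<sigma>\<^sub>1)) z\<^sub>1 + deg' \<sigma>\<^sub>2 (Alg (\<tau> @ \<sigma>\<^sub>1 @ \<sigma>\<^sub>2)) z\<^sub>2 + 1
         \<le> deg' \<rho> (Alg (\<tau> @ \<rho>)) z\<^sub>1 + deg' \<rho> (Alg (\<tau> @ \<rho>)) z\<^sub>2"
proof -
  let ?F = "Alg (\<tau> @ \<rho>)"
  have "Alg (\<tau> @ \<sigma>\<^sub>1) \<subseteq> ?F"
    using online_alg_prefix_mono[OF alg, of "\<tau> @ \<sigma>\<^sub>1" "\<sigma>\<^sub>2 @ [x]"] assms(4) by (simp add: \<rho>_def)
  then have gain\<^sub>1: "deg' \<sigma>\<^sub>1 (Alg (\<tau> @ \<sigma>\<^sub>1)) z\<^sub>1 + (if {x, Zv z\<^sub>1} \<in> ?F then 1 else 0) \<le> deg' \<rho> ?F z\<^sub>1"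
    by (intro deg'_add_request) (auto simp: \<rho>_def assms(5))
  have "Alg (\<tau> @ \<sigma>\<^sub>1 @ \<sigma>\<^sub>2) \<subseteq> ?F"
    using online_alg_prefix_mono[OF alg, of "\<tau> @ \<sigma>\<^sub>1 @ \<sigma>\<^sub>2" "[x]"] assms(4) by (simp add: \<rho>_def)
  then have gain\<^sub>2: "deg' \<sigma>\<^sub>2 (Alg (\<tau> @ \<sigma>\<^sub>1 @ \<sigma>\<^sub>2)) z\<^sub>2 + (if {x, Zv z\<^sub>2} \<in> ?F then 1 else 0) \<le> deg' \<rho> ?F z\<^sub>2"
    by (intro deg'_add_request) (auto simp: \<rho>_def assms(6))
  have "feasible l r (\<tau> @ \<rho>) ?F" using alg assms(4) by (simp add: online_alg_def)
  then have "\<exists>z\<in>{z\<^sub>1, z\<^sub>2}. {x, Zv z} \<in> ?F"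
    unfolding x_def by (rule feasible_request_edge) (simp add: \<rho>_def x_def)
  with gain\<^sub>1 gain\<^sub>2 show ?thesis by (auto split: if_splits)
qed

definition endpoint_choice :: "vtx set \<Rightarrow> nat set \<Rightarrow> (vtx \<Rightarrow> nat) \<Rightarrow> bool" where
  "endpoint_choice T S f \<longleftrightarrow> inj_on f T \<and> f ` T \<subseteq> S \<and> (\<forall>p. Xv p \<in> T \<longrightarrow> f (Xv p) \<in> p)"

lemma endpoint_choice_empty: "endpoint_choice {} S f"
  by (simp add: endpoint_choice_def)

lemma endpoint_choice_combine:
  assumes "endpoint_choice T\<^sub>1 S\<^sub>1 f\<^sub>1" "endpoint_choice T\<^sub>2 S\<^sub>2 f\<^sub>2"
    and "S\<^sub>1 \<inter> S\<^sub>2 = {}" "z \<notin> S\<^sub>1 \<union> S\<^sub>2" "z \<in> p"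
  shows "endpoint_choice (insert (Xv p) (T\<^sub>1 \<union> T\<^sub>2)) (insert z (S\<^sub>1 \<union> S\<^sub>2))
           (\<lambda>v. if v = Xv p then z else if v \<in> T\<^sub>1 then f\<^sub>1 v else f\<^sub>2 v)"
    (is "endpoint_choice _ _ ?f")
proof -
  have inj: "inj_on f\<^sub>1 T\<^sub>1" "inj_on f\<^sub>2 T\<^sub>2"
    and img: "f\<^sub>1 ` T\<^sub>1 \<subseteq> S\<^sub>1" "f\<^sub>2 ` T\<^sub>2 \<subseteq> S\<^sub>2"
    using assms(1,2) by (auto simp: endpoint_choice_def)
  let ?U\<^sub>1 = "T\<^sub>1 - {Xv p}" and ?U\<^sub>2 = "T\<^sub>2 - T\<^sub>1 - {Xv p}"
  have "inj_on ?f ?U\<^sub>1"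
    by (rule inj_on_cong[THEN iffD2, of _ _ f\<^sub>1]) (auto intro: inj_on_subset[OF inj(1)])
  moreover have "inj_on ?f ?U\<^sub>2"
    by (rule inj_on_cong[THEN iffD2, of _ _ f\<^sub>2]) (auto intro: inj_on_subset[OF inj(2)])
  moreover have "?f ` ?U\<^sub>1 \<subseteq> S\<^sub>1" "?f ` ?U\<^sub>2 \<subseteq> S\<^sub>2"
    using img by auto
  ultimately have "inj_on ?f (insert (Xv p) (?U\<^sub>1 \<union> ?U\<^sub>2))"
    using assms(3,4) by (auto simp: inj_on_Un)
  moreover have "insert (Xv p) (?U\<^sub>1 \<union> ?U\<^sub>2) = insert (Xv p) (T\<^sub>1 \<union> T\<^sub>2)" by auto
  ultimately show ?thesis
    using assms unfolding endpoint_choice_def by auto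
qed

lemma endpoint_choice_pair_request:
  assumes "endpoint_choice T\<^sub>1 (S\<^sub>1 - {z\<^sub>1}) f\<^sub>1" "endpoint_choice T\<^sub>2 (S\<^sub>2 - {z\<^sub>2}) f\<^sub>2"
    and "S\<^sub>1 \<inter> S\<^sub>2 = {}" "z\<^sub>1 \<in> S\<^sub>1" "z\<^sub>2 \<in> S\<^sub>2"
  shows "\<exists>f. endpoint_choice (insert (Xv {z\<^sub>1, z\<^sub>2}) (T\<^sub>1 \<union> T\<^sub>2)) (S\<^sub>1 \<union> S\<^sub>2 - {z\<^sub>1}) f"
proof -
  have "S\<^sub>1 \<union> S\<^sub>2 - {z\<^sub>1} = insert z\<^sub>2 ((S\<^sub>1 - {z\<^sub>1}) \<union> (S\<^sub>2 - {z\<^sub>2}))"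
    using assms(3-5) by auto
  moreover have "endpoint_choice (insert (Xv {z\<^sub>1, z\<^sub>2}) (T\<^sub>1 \<union> T\<^sub>2)) (insert z\<^sub>2 ((S\<^sub>1 - {z\<^sub>1}) \<union> (S\<^sub>2 - {z\<^sub>2})))
      (\<lambda>v. if v = Xv {z\<^sub>1, z\<^sub>2} then z\<^sub>2 else if v \<in> T\<^sub>1 then f\<^sub>1 v else f\<^sub>2 v)"
    by (rule endpoint_choice_combine[OF assms(1,2)]) (use assms(3-5) in auto)
  ultimately show ?thesis by auto
qed

definition star_solution :: "nat \<Rightarrow> nat \<Rightarrow> vtx set \<Rightarrow> (vtx \<Rightarrow> nat) \<Rightarrow> vtx set set" where
  "star_solution l r T f =
     (\<lambda>x. {x, Zv (f x)}) ` T \<union> {{Zv a, Zv r} | a. a \<in> Zs l \<and> a \<noteq> r}"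

lemma feasible_star_solution:
  assumes "r \<in> Zs l" "set \<sigma> \<subseteq> Xs l" "endpoint_choice (set \<sigma>) S f" "S \<subseteq> Zs l"
  shows "feasible l r \<sigma> (star_solution l r (set \<sigma>) f)"
  unfolding feasible_def
proof
  let ?F = "star_solution l r (set \<sigma>) f"
  show "?F \<subseteq> edges l"
  proof
    fix e assume "e \<in> ?F"
    then consider (request) y where "y \<in> set \<sigma>" "e = {y, Zv (f y)}"
      | (root) a where "a \<in> Zs l" "a \<noteq> r" "e = {Zv a, Zv r}"
      unfolding star_solution_def by auto
    then show "e \<in> edges l"
    proof cases
      case request
      then obtain p where "y = Xv p" "Xv p \<in> Xs l" "f y \<in> p"
        using assms(2,3) unfolding Xs_def endpoint_choice_def by auto
      then show ?thesis unfolding edges_def using request by blast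
    next
      case root
      then show ?thesis unfolding edges_def using assms(1) by blast
    qed
  qed
  show "\<forall>x\<in>set \<sigma>. connected_in ?F x (Zv r)"
  proof
    fix x assume x: "x \<in> set \<sigma>"
    let ?R = "{(a, b). {a, b} \<in> ?F}"
    have "(x, Zv (f x)) \<in> ?R" using x unfolding star_solution_def by auto
    moreover have "(Zv (f x), Zv r) \<in> ?R\<^sup>*"
    proof (cases "f x = r")
      case False
      have "f x \<in> Zs l" using assms(3,4) x unfolding endpoint_choice_def by auto
      with False have "(Zv (f x), Zv r) \<in> ?R" unfolding star_solution_def by auto
      then show ?thesis by auto
    qed simp
    ultimately show "connected_in ?F x (Zv r)"
      unfolding connected_in_def by (rule converse_rtrancl_into_rtrancl)
  qed
qed

lemma deg_star_solution:
  assumes "set \<sigma> \<subseteq> Xs l"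
  shows "deg l (star_solution l r (set \<sigma>) f) z = card {x \<in> set \<sigma>. f x = z}"
proof -
  have "{x \<in> Xs l. {x, Zv z} \<in> star_solution l r (set \<sigma>) f} = {x \<in> set \<sigma>. f x = z}"
    using assms by (auto simp: star_solution_def Xs_def doubleton_eq_iff)
  then show ?thesis by (simp add: deg_def)
qed

lemma card_fiber_le_1:
  assumes "inj_on f T"
  shows "card {x \<in> T. f x = z} \<le> 1"
proof (cases "finite {x \<in> T. f x = z}")
  case True
  then show ?thesis using assms by (simp add: card_le_Suc0_iff_eq inj_on_def)
qed simp

locale random_online_alg = prob_space M for M :: "'w measure" +
  fixes l r :: nat and A :: "'w \<Rightarrow> vtx list \<Rightarrow> vtx set set"
  assumes online: "\<forall>\<omega>\<in>space M. online_alg l r (A \<omega>)"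
    and measurable_A: "\<forall>\<sigma>. (\<lambda>\<omega>. A \<omega> \<sigma>) \<in> measurable M (count_space UNIV)"
begin

lemma integrable_deg': "integrable M (\<lambda>\<omega>. real (deg' \<sigma> (A \<omega> \<tau>) z))"
proof (rule integrable_const_bound[where B = "real (length \<sigma>)"])
  show "AE \<omega> in M. norm (real (deg' \<sigma> (A \<omega> \<tau>) z)) \<le> real (length \<sigma>)"
    by (simp add: deg'_le_length)
  have "(\<lambda>F. real (deg' \<sigma> F z)) \<in> measurable (count_space UNIV) borel"
    by (simp add: measurable_count_space_eq1)
  from measurable_compose[OF measurable_A[rule_format] this]
  show "(\<lambda>\<omega>. real (deg' \<sigma> (A \<omega> \<tau>) z)) \<in> borel_measurable M" .
qed

lemma expected_deg'_gain:
  fixes \<tau> \<sigma>\<^sub>1 \<sigma>\<^sub>2 :: "vtx list" and z\<^sub>1 z\<^sub>2 :: nat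
  defines "x \<equiv> Xv {z\<^sub>1, z\<^sub>2}"
  defines "\<rho> \<equiv> \<sigma>\<^sub>1 @ \<sigma>\<^sub>2 @ [x]"
  assumes "set (\<tau> @ \<rho>) \<subseteq> Xs l" "x \<notin> set \<sigma>\<^sub>1" "x \<notin> set \<sigma>\<^sub>2"
  shows "(\<integral>\<omega>. real (deg' \<sigma>\<^sub>1 (A \<omega> (\<tau> @ \<sigma>\<^sub>1)) z\<^sub>1) \<partial>M)
           + (\<integral>\<omega>. real (deg' \<sigma>\<^sub>2 (A \<omega> (\<tau> @ \<sigma>\<^sub>1 @ \<sigma>\<^sub>2)) z\<^sub>2) \<partial>M) + 1
         \<le> (\<integral>\<omega>. real (deg' \<rho> (A \<omega> (\<tau> @ \<rho>)) z\<^sub>1) \<partial>M)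
           + (\<integral>\<omega>. real (deg' \<rho> (A \<omega> (\<tau> @ \<rho>)) z\<^sub>2) \<partial>M)"
proof -
  have pointwise: "real (deg' \<sigma>\<^sub>1 (A \<omega> (\<tau> @ \<sigma>\<^sub>1)) z\<^sub>1) + real (deg' \<sigma>\<^sub>2 (A \<omega> (\<tau> @ \<sigma>\<^sub>1 @ \<sigma>\<^sub>2)) z\<^sub>2) + 1
      \<le> real (deg' \<rho> (A \<omega> (\<tau> @ \<rho>)) z\<^sub>1) + real (deg' \<rho> (A \<omega> (\<tau> @ \<rho>)) z\<^sub>2)"
    if "\<omega> \<in> space M" for \<omega>
    using online_alg_deg'_gain[of l r "A \<omega>" \<tau> \<sigma>\<^sub>1 \<sigma>\<^sub>2 z\<^sub>1 z\<^sub>2] online that assms(3-5)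
    unfolding x_def \<rho>_def by (simp flip: of_nat_add of_nat_Suc)
  have "(\<integral>\<omega>. real (deg' \<sigma>\<^sub>1 (A \<omega> (\<tau> @ \<sigma>\<^sub>1)) z\<^sub>1) + real (deg' \<sigma>\<^sub>2 (A \<omega> (\<tau> @ \<sigma>\<^sub>1 @ \<sigma>\<^sub>2)) z\<^sub>2) + 1 \<partial>M)
      \<le> (\<integral>\<omega>. real (deg' \<rho> (A \<omega> (\<tau> @ \<rho>)) z\<^sub>1) + real (deg' \<rho> (A \<omega> (\<tau> @ \<rho>)) z\<^sub>2) \<partial>M)"
    using pointwise by (intro integral_mono) (auto intro!: integrable_deg')
  then show ?thesis
    by (simp add: Bochner_Integration.integral_add integrable_deg' prob_space del: of_nat_add)
qed

lemma adversarial_sequence: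
  assumes "S \<subseteq> Zs l" "card S = 2 ^ s" "set \<tau> \<subseteq> Xs l"
  shows "\<exists>\<sigma> zs f. set \<sigma> \<subseteq> Xs l \<and> (\<forall>p. Xv p \<in> set \<sigma> \<longrightarrow> p \<subseteq> S) \<and> zs \<in> S \<and>
           endpoint_choice (set \<sigma>) (S - {zs}) f \<and>
           (\<integral>\<omega>. real (deg' \<sigma> (A \<omega> (\<tau> @ \<sigma>)) zs) \<partial>M) \<ge> real s / 2"
  using assms
proof (induction s arbitrary: S \<tau>)
  case 0
  then obtain z where "S = {z}" by (auto simp: card_Suc_eq)
  then show ?case by (intro exI[of _ "[]"] exI[of _ z]) (auto simp: endpoint_choice_empty)
next
  case (Suc s)
  obtain S\<^sub>1 where S\<^sub>1: "S\<^sub>1 \<subseteq> S" "card S\<^sub>1 = 2 ^ s"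
    using obtain_subset_with_card_n[of "2 ^ s" S] Suc.prems(2) by auto
  define S\<^sub>2 where "S\<^sub>2 = S - S\<^sub>1"
  have "finite S" using Suc.prems(2) card_ge_0_finite by force
  then have "card S\<^sub>2 = 2 ^ s" using S\<^sub>1 Suc.prems(2) by (simp add: S\<^sub>2_def card_Diff_subset finite_subset)
  obtain \<sigma>\<^sub>1 z\<^sub>1 f\<^sub>1 where \<sigma>\<^sub>1: "set \<sigma>\<^sub>1 \<subseteq> Xs l" "\<forall>p. Xv p \<in> set \<sigma>\<^sub>1 \<longrightarrow> p \<subseteq> S\<^sub>1" "z\<^sub>1 \<in> S\<^sub>1"
      "endpoint_choice (set \<sigma>\<^sub>1) (S\<^sub>1 - {z\<^sub>1}) f\<^sub>1"
      "(\<integral>\<omega>. real (deg' \<sigma>\<^sub>1 (A \<omega> (\<tau> @ \<sigma>\<^sub>1)) z\<^sub>1) \<partial>M) \<ge> real s / 2"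
    using Suc.IH[OF _ S\<^sub>1(2) Suc.prems(3)] S\<^sub>1(1) Suc.prems(1) by blast
  have "S\<^sub>2 \<subseteq> Zs l" "set (\<tau> @ \<sigma>\<^sub>1) \<subseteq> Xs l"
    using Suc.prems(1,3) \<sigma>\<^sub>1(1) by (auto simp: S\<^sub>2_def)
  obtain \<sigma>\<^sub>2 z\<^sub>2 f\<^sub>2 where \<sigma>\<^sub>2: "set \<sigma>\<^sub>2 \<subseteq> Xs l" "\<forall>p. Xv p \<in> set \<sigma>\<^sub>2 \<longrightarrow> p \<subseteq> S\<^sub>2" "z\<^sub>2 \<in> S\<^sub>2"
      "endpoint_choice (set \<sigma>\<^sub>2) (S\<^sub>2 - {z\<^sub>2}) f\<^sub>2"
      "(\<integral>\<omega>. real (deg' \<sigma>\<^sub>2 (A \<omega> (\<tau> @ \<sigma>\<^sub>1 @ \<sigma>\<^sub>2)) z\<^sub>2) \<partial>M) \<ge> real s / 2"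
    using Suc.IH[OF \<open>S\<^sub>2 \<subseteq> Zs l\<close> \<open>card S\<^sub>2 = 2 ^ s\<close> \<open>set (\<tau> @ \<sigma>\<^sub>1) \<subseteq> Xs l\<close>] by auto
  define x where "x = Xv {z\<^sub>1, z\<^sub>2}"
  define \<rho> where "\<rho> = \<sigma>\<^sub>1 @ \<sigma>\<^sub>2 @ [x]"
  have "z\<^sub>1 \<noteq> z\<^sub>2" "z\<^sub>1 \<in> S" "z\<^sub>2 \<in> S" using \<sigma>\<^sub>1(3) \<sigma>\<^sub>2(3) S\<^sub>1(1) by (auto simp: S\<^sub>2_def)
  then have "x \<in> Xs l" using Suc.prems(1) by (auto simp: x_def Xs_def)
  then have \<rho>_Xs: "set \<rho> \<subseteq> Xs l" using \<sigma>\<^sub>1(1) \<sigma>\<^sub>2(1) by (auto simp: \<rho>_def)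
  have \<rho>_S: "\<forall>p. Xv p \<in> set \<rho> \<longrightarrow> p \<subseteq> S"
    using \<sigma>\<^sub>1(2) \<sigma>\<^sub>2(2) \<open>z\<^sub>1 \<in> S\<close> \<open>z\<^sub>2 \<in> S\<close> S\<^sub>1(1) by (auto simp: \<rho>_def x_def S\<^sub>2_def)
  have "x \<notin> set \<sigma>\<^sub>1" "x \<notin> set \<sigma>\<^sub>2"
    using \<sigma>\<^sub>1(2,3) \<sigma>\<^sub>2(2,3) by (auto simp: x_def S\<^sub>2_def)
  then have gain: "real s + 1 \<le> (\<integral>\<omega>. real (deg' \<rho> (A \<omega> (\<tau> @ \<rho>)) z\<^sub>1) \<partial>M)
                    + (\<integral>\<omega>. real (deg' \<rho> (A \<omega> (\<tau> @ \<rho>)) z\<^sub>2) \<partial>M)"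
    using expected_deg'_gain[of \<tau> \<sigma>\<^sub>1 \<sigma>\<^sub>2 z\<^sub>1 z\<^sub>2] \<rho>_Xs Suc.prems(3) \<sigma>\<^sub>1(5) \<sigma>\<^sub>2(5)
    unfolding x_def \<rho>_def by simp
  have "S = S\<^sub>1 \<union> S\<^sub>2" "S = S\<^sub>2 \<union> S\<^sub>1" "S\<^sub>1 \<inter> S\<^sub>2 = {}" "S\<^sub>2 \<inter> S\<^sub>1 = {}"
    using S\<^sub>1(1) by (auto simp: S\<^sub>2_def)
  moreover have "set \<rho> = insert x (set \<sigma>\<^sub>1 \<union> set \<sigma>\<^sub>2)" "set \<rho> = insert x (set \<sigma>\<^sub>2 \<union> set \<sigma>\<^sub>1)"
    by (auto simp: \<rho>_def)
  ultimately have choice\<^sub>1: "\<exists>f. endpoint_choice (set \<rho>) (S - {z\<^sub>1}) f"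
    and choice\<^sub>2: "\<exists>f. endpoint_choice (set \<rho>) (S - {z\<^sub>2}) f"
    using endpoint_choice_pair_request[OF \<sigma>\<^sub>1(4) \<sigma>\<^sub>2(4) _ \<sigma>\<^sub>1(3) \<sigma>\<^sub>2(3)]
      endpoint_choice_pair_request[OF \<sigma>\<^sub>2(4) \<sigma>\<^sub>1(4) _ \<sigma>\<^sub>2(3) \<sigma>\<^sub>1(3)]
    by (simp_all add: x_def insert_commute)
  let ?E = "\<lambda>z. \<integral>\<omega>. real (deg' \<rho> (A \<omega> (\<tau> @ \<rho>)) z) \<partial>M"
  have "?E z\<^sub>1 \<ge> real (Suc s) / 2 \<or> ?E z\<^sub>2 \<ge> real (Suc s) / 2"
    using gain unfolding of_nat_Suc by argo
  then show ?case
  proof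
    assume "?E z\<^sub>1 \<ge> real (Suc s) / 2"
    then show ?thesis using choice\<^sub>1 \<rho>_Xs \<rho>_S \<open>z\<^sub>1 \<in> S\<close> by blast
  next
    assume "?E z\<^sub>2 \<ge> real (Suc s) / 2"
    then show ?thesis using choice\<^sub>2 \<rho>_Xs \<rho>_S \<open>z\<^sub>2 \<in> S\<close> by blast
  qed
qed

end

theorem lemma4:
  fixes l r :: nat and M :: "'w measure" and A :: "'w \<Rightarrow> vtx list \<Rightarrow> vtx set set"
  assumes "r \<in> Zs l"
    and "prob_space M"
    and "\<forall>\<omega>\<in>space M. online_alg l r (A \<omega>)"
    and "\<forall>\<sigma>. (\<lambda>\<omega>. A \<omega> \<sigma>) \<in> measurable M (count_space UNIV)"
  shows "\<forall>S s. S \<subseteq> Zs l \<and> card S = 2 ^ s \<and> s \<le> l \<longrightarrow>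
    (\<exists>\<sigma>. set \<sigma> \<subseteq> Xs l \<and>
        (\<forall>p. Xv p \<in> set \<sigma> \<longrightarrow> p \<subseteq> S) \<and>
        (\<exists>zs\<in>S. (\<integral>\<omega>. real (deg' \<sigma> (A \<omega> \<sigma>) zs) \<partial>M) \<ge> real s / 2 \<and>
           (\<exists>OFF. feasible l r \<sigma> OFF \<and> (\<forall>z\<in>S. deg l OFF z \<le> 1) \<and>
                  (\<forall>z\<in>(Zs l - S) \<union> {zs}. deg l OFF z = 0))))"
proof (intro allI impI)
  fix S s assume S: "S \<subseteq> Zs l \<and> card S = 2 ^ s \<and> s \<le> l"
  interpret random_online_alg M l r A
    using assms by (simp add: random_online_alg_def random_online_alg_axioms_def)
  obtain \<sigma> zs f where \<sigma>: "set \<sigma> \<subseteq> Xs l" "\<forall>p. Xv p \<in> set \<sigma> \<longrightarrow> p \<subseteq> S" "zs \<in> S"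
      "endpoint_choice (set \<sigma>) (S - {zs}) f"
      "(\<integral>\<omega>. real (deg' \<sigma> (A \<omega> \<sigma>) zs) \<partial>M) \<ge> real s / 2"
    using adversarial_sequence[of S s "[]"] S by auto
  let ?OFF = "star_solution l r (set \<sigma>) f"
  have "feasible l r \<sigma> ?OFF"
    using feasible_star_solution[OF assms(1) \<sigma>(1,4)] S by blast
  moreover have "\<forall>z\<in>S. deg l ?OFF z \<le> 1"
    using card_fiber_le_1[of f "set \<sigma>"] \<sigma>(4)
    by (simp add: deg_star_solution[OF \<sigma>(1)] endpoint_choice_def)
  moreover have "\<forall>z\<in>(Zs l - S) \<union> {zs}. deg l ?OFF z = 0"
    using \<sigma>(4) by (auto simp: deg_star_solution[OF \<sigma>(1)] endpoint_choice_def)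
  ultimately show "\<exists>\<sigma>. set \<sigma> \<subseteq> Xs l \<and> (\<forall>p. Xv p \<in> set \<sigma> \<longrightarrow> p \<subseteq> S) \<and>
        (\<exists>zs\<in>S. (\<integral>\<omega>. real (deg' \<sigma> (A \<omega> \<sigma>) zs) \<partial>M) \<ge> real s / 2 \<and>
           (\<exists>OFF. feasible l r \<sigma> OFF \<and> (\<forall>z\<in>S. deg l OFF z \<le> 1) \<and>
                  (\<forall>z\<in>(Zs l - S) \<union> {zs}. deg l OFF z = 0)))"
    using \<sigma>(1,2,3,5) by blast
qed

end
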